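(* Every basis $B$ for $\mathbb{Z}$ can be written in the form $B=\{d_1,\,2d_2,\,2^2d_3,\,2^3d_4,\dots\}$, where all the integers $d_1,d_2,\dots$ are odd. Equivalently, for every $j\ge 0$, $B$ contains exactly one element $b$ such that $2^j$ divides $b$ and $2^{j+1}$ does not divide $b$, and $B$ contains no other elements.
   Context: A set of integers $B=\{b_1,b_2,\dots\}$, with the $b_i$ pairwise distinct, is a basis for $\mathbb{Z}$ if every $x\in\mathbb{Z}$ can be written in exactly one way as $x=\sum_{i\ge1}\epsilon_i b_i$ with every $\epsilon_i\in\{0,1\}$ and $\sum_i\epsilon_i<\infty$. *)

theory Defs
  imports Main
begin

text \<open>B is a basis for Z: every integer is, in exactly one way, a finite sum
 of distinct elements of B (choosing epsilon_i in {0,1} with finitely many 1s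
 is the same as choosing a finite subset of B, since the b_i are distinct).\<close>
definition is_basis_Z :: "int set \<Rightarrow> bool" where
  "is_basis_Z B \<longleftrightarrow> (\<forall>x::int. \<exists>!S. finite S \<and> S \<subseteq> B \<and> \<Sum>S = x)"

end

theory Submission
  imports Defs "HOL-Computational_Algebra.Primes"
begin

(* The heart of the argument is that B contains exactly one odd element.  It
   exists because 1 is a subset sum of B.  For uniqueness, let a, b be distinct
   elements of B and R the set of subset sums of B - {a, b}: every integer x lies
   in exactly one of R, R + a, R + b, R + a + b, so the indicator r of R satisfies
   r x + r (x - a) + r (x - b) + r (x - a - b) = 1.  Such a 0/1-valued function is
   periodic with period 2|ab|, and summing the identity over one period gives
   4 * (number of elements of R per period) = 2|ab|, so ab is even.

   Knowing the unique odd element, every even integer is represented using even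
   elements only, hence {c. 2c in B} is again a basis; induction on j then gives
   exactly one element of valuation j.  Together with 0 notin B this yields the
   decomposition B = {d_0, 2 d_1, 4 d_2, ...} with all d_i odd. *)

section \<open>Periodic functions on the integers\<close>

lemma periodic_multiple:
  fixes f :: "int \<Rightarrow> 'a"
  assumes period: "\<And>x. f (x + p) = f x"
  shows "f (x + p * k) = f x"
proof -
  have nonneg: "f (y + p * int n) = f y" for y n
  proof (induction n)
    case (Suc n)
    have "f (y + p * int (Suc n)) = f ((y + p * int n) + p)" by (simp add: algebra_simps)
    with Suc show ?case by (simp only: period)
  qed simp
  show ?thesis
  proof (cases "k \<ge> 0")
    case True
    with nonneg[of x "nat k"] show ?thesis by simp
  next
    case False
    with nonneg[of "x + p * k" "nat (- k)"] show ?thesis by simp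
  qed
qed

lemma periodic_sum_shift:
  fixes f :: "int \<Rightarrow> 'a::comm_monoid_add"
  assumes "N > 0" and period: "\<And>x. f (x + N) = f x"
  shows "(\<Sum>x\<in>{0..<N}. f (x + c)) = (\<Sum>x\<in>{0..<N}. f x)"
proof (rule sum.reindex_bij_witness[where j = "\<lambda>x. (x + c) mod N" and i = "\<lambda>y. (y - c) mod N"])
  fix x assume x: "x \<in> {0..<N}"
  show "((x + c) mod N - c) mod N = x" using x by (simp add: mod_diff_left_eq)
  show "((x - c) mod N + c) mod N = x" using x by (simp add: mod_add_left_eq)
  show "(x + c) mod N \<in> {0..<N}" "(x - c) mod N \<in> {0..<N}" using \<open>N > 0\<close> by simp_all
  have "f ((x + c) mod N + N * ((x + c) div N)) = f ((x + c) mod N)"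
    by (rule periodic_multiple) (rule period)
  then show "f ((x + c) mod N) = f (x + c)" by (simp add: mod_mult_div_eq)
qed

lemma alternating_periodic:
  fixes f :: "int \<Rightarrow> int"
  assumes alt: "\<And>x. f x + f (x - a) = 1"
  shows "f (x + 2 * a) = f x"
  using alt[of "x + 2 * a"] alt[of "x + a"] by (simp add: algebra_simps)

text \<open>If the translates of a set R by 0, a, b, a + b tile the integers (r is the
  indicator of R), then ab is even: r is periodic with period 2|ab| and each period
  contains 2|ab|/4 points of R.\<close>
lemma tiling_parity:
  fixes r :: "int \<Rightarrow> int" and a b :: int
  assumes r01: "\<And>x. r x = 0 \<or> r x = 1"
    and tile: "\<And>x. r x + r (x - a) + r (x - b) + r (x - a - b) = 1"
    and nonzero: "a \<noteq> 0" "b \<noteq> 0"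
  shows "even (a * b)"
proof -
  define u where "u x = r x + r (x - b)" for x
  define v where "v x = r x + r (x - a)" for x
  have u_period: "u (x + 2 * a) = u x" for x
    by (rule alternating_periodic) (use tile in \<open>simp add: u_def algebra_simps\<close>)
  have v_period: "v (x + 2 * b) = v x" for x
    by (rule alternating_periodic) (use tile in \<open>simp add: v_def algebra_simps\<close>)
  \<comment> \<open>at most one of the four translates contains x, so the cross terms vanish\<close>
  have r_uv: "r x = u x * v x" for x
    using tile[of x] r01[of x] r01[of "x - a"] r01[of "x - b"] r01[of "x - a - b"]
    unfolding u_def v_def by auto
  define N where "N = 2 * \<bar>a * b\<bar>"
  have "N > 0" using nonzero by (simp add: N_def)
  have "2 * a dvd N" "2 * b dvd N" by (simp_all add: N_def abs_mult)
  then obtain ka kb where ka: "N = 2 * a * ka" and kb: "N = 2 * b * kb" unfolding dvd_def by blast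
  have r_period: "r (x + N) = r x" for x
  proof -
    have "u (x + N) = u x" using periodic_multiple[of u "2 * a" x ka] u_period ka by simp
    moreover have "v (x + N) = v x" using periodic_multiple[of v "2 * b" x kb] v_period kb by simp
    ultimately show ?thesis by (simp add: r_uv)
  qed
  have shift: "(\<Sum>x\<in>{0..<N}. r (x - c)) = (\<Sum>x\<in>{0..<N}. r x)" for c
    using periodic_sum_shift[of N r "- c", OF \<open>N > 0\<close> r_period] by simp
  have "N = (\<Sum>x\<in>{0..<N}. r x + r (x - a) + r (x - b) + r (x - a - b))"
    using \<open>N > 0\<close> by (simp add: tile)
  also have "\<dots> = 4 * (\<Sum>x\<in>{0..<N}. r x)"
    using shift[of a] shift[of b] shift[of "a + b"] by (simp add: sum.distrib diff_diff_eq)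
  finally have "\<bar>a * b\<bar> = 2 * (\<Sum>x\<in>{0..<N}. r x)" unfolding N_def by linarith
  then show ?thesis by (metis dvd_abs_iff dvd_triv_left)
qed

section \<open>Subset-sum representations\<close>

lemma basis_unique_rep: "is_basis_Z B \<Longrightarrow> \<exists>!T. finite T \<and> T \<subseteq> B \<and> \<Sum>T = x"
  unfolding is_basis_Z_def by simp

lemma basis_rep_eq:
  assumes "is_basis_Z B" "finite T1" "T1 \<subseteq> B" "finite T2" "T2 \<subseteq> B" "\<Sum>T1 = \<Sum>T2"
  shows "T1 = T2"
  using assms unfolding is_basis_Z_def by (metis (no_types, lifting))

definition subset_sums :: "int set \<Rightarrow> int set" where
  "subset_sums C = {\<Sum>S | S. finite S \<and> S \<subseteq> C}"

lemma mem_subset_sums: "y \<in> subset_sums C \<longleftrightarrow> (\<exists>S. finite S \<and> S \<subseteq> C \<and> \<Sum>S = y)"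
  unfolding subset_sums_def by blast

lemma basis_split:
  assumes basis: "is_basis_Z B" and "finite A" "A \<subseteq> B"
  shows "\<exists>!A'. A' \<subseteq> A \<and> x - \<Sum>A' \<in> subset_sums (B - A)"
proof (rule ex_ex1I)
  obtain T where T: "finite T" "T \<subseteq> B" "\<Sum>T = x" using basis_unique_rep[OF basis, of x] by blast
  have "x - \<Sum>(T \<inter> A) = \<Sum>(T - A)" using sum.Int_Diff[OF T(1), of "\<lambda>t. t" A] T(3) by simp
  then have "x - \<Sum>(T \<inter> A) \<in> subset_sums (B - A)"
    unfolding mem_subset_sums using T(1,2) by (intro exI[of _ "T - A"]) auto
  then show "\<exists>A'. A' \<subseteq> A \<and> x - \<Sum>A' \<in> subset_sums (B - A)" by blast
next
  have join: "finite (Ai \<union> Si) \<and> Ai \<union> Si \<subseteq> B \<and> \<Sum>(Ai \<union> Si) = \<Sum>Ai + \<Sum>Si"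
    if "Ai \<subseteq> A" "finite Si" "Si \<subseteq> B - A" for Ai Si
  proof -
    have "finite Ai" using that(1) \<open>finite A\<close> by (rule finite_subset)
    moreover have "Ai \<subseteq> B" using that(1) \<open>A \<subseteq> B\<close> by (rule subset_trans)
    moreover have "Si \<subseteq> B" "Ai \<inter> Si = {}" using that(1,3) by blast+
    ultimately show ?thesis using that(2) by (simp add: sum.union_disjoint)
  qed
  fix A1 A2
  assume "A1 \<subseteq> A \<and> x - \<Sum>A1 \<in> subset_sums (B - A)" "A2 \<subseteq> A \<and> x - \<Sum>A2 \<in> subset_sums (B - A)"
  then have "A1 \<subseteq> A" "A2 \<subseteq> A"
    and "\<exists>S. finite S \<and> S \<subseteq> B - A \<and> \<Sum>S = x - \<Sum>A1"
    and "\<exists>S. finite S \<and> S \<subseteq> B - A \<and> \<Sum>S = x - \<Sum>A2"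
    unfolding mem_subset_sums by simp_all
  then obtain S1 S2 where A1: "A1 \<subseteq> A" "finite S1" "S1 \<subseteq> B - A" "\<Sum>S1 = x - \<Sum>A1"
    and A2: "A2 \<subseteq> A" "finite S2" "S2 \<subseteq> B - A" "\<Sum>S2 = x - \<Sum>A2"
    by (elim exE conjE)
  have "A1 \<union> S1 = A2 \<union> S2"
    using basis_rep_eq[OF basis] join[OF A1(1-3)] join[OF A2(1-3)] A1(4) A2(4) by simp
  then show "A1 = A2" using A1(1,3) A2(1,3) by blast
qed

lemma basis_pair_tiling:
  assumes basis: "is_basis_Z B" and "a \<in> B" "b \<in> B" "a \<noteq> b"
  defines "r \<equiv> \<lambda>x. of_bool (x \<in> subset_sums (B - {a, b})) :: int"
  shows "r x + r (x - a) + r (x - b) + r (x - a - b) = 1"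
proof -
  have "\<exists>!A'. A' \<subseteq> {a, b} \<and> x - \<Sum>A' \<in> subset_sums (B - {a, b})"
    using basis_split[OF basis, of "{a, b}" x] assms(2,3) by simp
  then obtain A0 where A0: "A0 \<subseteq> {a, b} \<and> x - \<Sum>A0 \<in> subset_sums (B - {a, b})"
    and unique: "\<forall>A'. A' \<subseteq> {a, b} \<and> x - \<Sum>A' \<in> subset_sums (B - {a, b}) \<longrightarrow> A' = A0"
    by (rule ex1E)
  have "r x + r (x - a) + r (x - b) + r (x - a - b) = (\<Sum>A'\<in>Pow {a, b}. r (x - \<Sum>A'))"
  proof -
    have "Pow {a, b} = {{}, {a}, {b}, {a, b}}" by blast
    then show ?thesis using \<open>a \<noteq> b\<close> by (simp add: algebra_simps)
  qed
  also have "\<dots> = (\<Sum>A'\<in>Pow {a, b}. if A' = A0 then 1 else 0)"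
  proof (rule sum.cong)
    fix A' assume "A' \<in> Pow {a, b}"
    show "r (x - \<Sum>A') = (if A' = A0 then 1 else 0)"
    proof (cases "A' = A0")
      case True
      then show ?thesis using A0 by (simp add: r_def)
    next
      case False
      then have "x - \<Sum>A' \<notin> subset_sums (B - {a, b})"
        using unique \<open>A' \<in> Pow {a, b}\<close> by blast
      then show ?thesis using False by (simp add: r_def)
    qed
  qed simp
  also have "\<dots> = 1" using A0 by (simp add: sum.delta)
  finally show ?thesis .
qed

section \<open>The odd element of a basis\<close>

text \<open>A basis has an odd element, since 1 is a subset sum.\<close>
lemma basis_has_odd: assumes "is_basis_Z B" shows "\<exists>a\<in>B. odd a"
proof (rule ccontr)
  assume "\<not> (\<exists>a\<in>B. odd a)"
  moreover obtain T where "finite T" "T \<subseteq> B" "\<Sum>T = (1::int)"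
    using basis_unique_rep[OF assms, of 1] by blast
  ultimately have "even (1::int)" by (metis dvd_sum subsetD)
  then show False by simp
qed

text \<open>A basis has at most one odd element: two distinct odd elements a, b would give
  a tiling by 0, a, b, a + b, forcing ab to be even.\<close>
lemma basis_odd_unique:
  assumes basis: "is_basis_Z B" and "a \<in> B" "b \<in> B" "odd a" "odd b"
  shows "a = b"
proof (rule ccontr)
  assume "a \<noteq> b"
  have "even (a * b)"
    by (rule tiling_parity[OF _ basis_pair_tiling[OF basis \<open>a \<in> B\<close> \<open>b \<in> B\<close> \<open>a \<noteq> b\<close>]])
       (use \<open>odd a\<close> \<open>odd b\<close> in auto)
  then show False using \<open>odd a\<close> \<open>odd b\<close> by simp
qed

text \<open>0 is not in a basis, since {} and {0} would both represent 0.\<close>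
lemma basis_zero_notin: assumes "is_basis_Z B" shows "0 \<notin> B"
  using basis_rep_eq[OF assms, of "{}" "{0}"] by auto

text \<open>Halving the even elements of a basis gives a basis: even integers are
  represented without the unique odd element, i.e.\ by even elements only.\<close>
lemma basis_halve: assumes basis: "is_basis_Z B" shows "is_basis_Z {c. 2 * c \<in> B}"
  unfolding is_basis_Z_def
proof
  fix x :: int
  obtain a where a: "a \<in> B" "odd a" using basis_has_odd[OF basis] by blast
  have even_others: "even c" if "c \<in> B" "c \<noteq> a" for c
    using basis_odd_unique[OF basis a(1) that(1) a(2)] that(2) by auto
  obtain T where T: "finite T" "T \<subseteq> B" "\<Sum>T = 2 * x" using basis_unique_rep[OF basis, of "2 * x"] by blast
  have "a \<notin> T"
  proof
    assume "a \<in> T"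
    then have "\<Sum>T = a + \<Sum>(T - {a})" using T(1) by (simp add: sum.remove)
    moreover have "even (\<Sum>(T - {a}))" using T(2) even_others by (intro dvd_sum) auto
    ultimately have "odd (\<Sum>T)" using a(2) by simp
    then show False using T(3) by simp
  qed
  define double :: "int \<Rightarrow> int" where "double c = 2 * c" for c
  have inj: "inj double" by (simp add: double_def inj_def)
  have sum_double: "\<Sum>(double ` S) = 2 * \<Sum>S" for S
    by (simp add: sum.reindex[OF inj_on_subset[OF inj subset_UNIV]]) (simp add: double_def sum_distrib_left)
  define S where "S = {c. 2 * c \<in> T}"
  have TS: "T = double ` S"
  proof
    show "T \<subseteq> double ` S"
    proof
      fix t assume "t \<in> T"
      then have "even t" using T(2) \<open>a \<notin> T\<close> even_others by blast
      then obtain c where "t = 2 * c" by (rule evenE)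
      with \<open>t \<in> T\<close> show "t \<in> double ` S" unfolding S_def double_def by blast
    qed
  qed (auto simp: S_def double_def)
  show "\<exists>!S. finite S \<and> S \<subseteq> {c. 2 * c \<in> B} \<and> \<Sum>S = x"
  proof (rule ex1I[of _ S])
    have "finite S" using T(1) TS inj by (metis finite_imageD inj_on_subset subset_UNIV)
    moreover have "\<Sum>S = x" using T(3) TS sum_double by simp
    ultimately show "finite S \<and> S \<subseteq> {c. 2 * c \<in> B} \<and> \<Sum>S = x"
      using T(2) unfolding S_def by auto
  next
    fix S' assume S': "finite S' \<and> S' \<subseteq> {c. 2 * c \<in> B} \<and> \<Sum>S' = x"
    then have "finite (double ` S')" "double ` S' \<subseteq> B" "\<Sum>(double ` S') = \<Sum>T"
      using T(3) sum_double[of S'] by (auto simp: double_def)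
    then have "double ` S' = T" using basis_rep_eq[OF basis _ _ T(1,2)] by blast
    then show "S' = S" using TS inj by (simp add: inj_image_eq_iff)
  qed
qed

section \<open>The 2-adic layers of a basis\<close>

lemma exact_power_double:
  fixes c :: int
  shows "(2 ^ Suc j dvd 2 * c \<and> \<not> 2 ^ (Suc j + 1) dvd 2 * c) \<longleftrightarrow> (2 ^ j dvd c \<and> \<not> 2 ^ (j + 1) dvd c)"
proof -
  have cancel: "2 ^ Suc k dvd 2 * c \<longleftrightarrow> 2 ^ k dvd c" for k by simp
  show ?thesis using cancel[of j] cancel[of "Suc j"] by (simp only: Suc_eq_plus1)
qed

text \<open>A basis contains exactly one element of exact 2-adic valuation j, for every j:
  for j = 0 this is the unique odd element, and the elements of valuation j + 1 are
  the doubles of the elements of valuation j of the halved basis.\<close>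
lemma basis_layer_unique:
  "is_basis_Z B \<Longrightarrow> \<exists>!b. b \<in> B \<and> 2 ^ j dvd b \<and> \<not> 2 ^ (j + 1) dvd b"
proof (induction j arbitrary: B)
  case 0
  from basis_has_odd[OF "0"] obtain a where a: "a \<in> B" "odd a" by blast
  show ?case
  proof (rule ex1I[of _ a])
    show "a \<in> B \<and> 2 ^ 0 dvd a \<and> \<not> 2 ^ (0 + 1) dvd a" using a by simp
  next
    fix b assume "b \<in> B \<and> 2 ^ 0 dvd b \<and> \<not> 2 ^ (0 + 1) dvd b"
    then show "b = a" using basis_odd_unique[OF "0" _ a(1) _ a(2), of b] by simp
  qed
next
  case (Suc j)
  obtain c where c: "c \<in> {c. 2 * c \<in> B} \<and> 2 ^ j dvd c \<and> \<not> 2 ^ (j + 1) dvd c"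
    and c_unique: "\<forall>c'. c' \<in> {c. 2 * c \<in> B} \<and> 2 ^ j dvd c' \<and> \<not> 2 ^ (j + 1) dvd c' \<longrightarrow> c' = c"
    using Suc.IH[OF basis_halve[OF Suc.prems]] by (rule ex1E)
  show ?case
  proof (rule ex1I[of _ "2 * c"])
    show "2 * c \<in> B \<and> 2 ^ Suc j dvd 2 * c \<and> \<not> 2 ^ (Suc j + 1) dvd 2 * c"
      using c exact_power_double[of j c] by blast
  next
    fix b assume b: "b \<in> B \<and> 2 ^ Suc j dvd b \<and> \<not> 2 ^ (Suc j + 1) dvd b"
    then have "2 ^ Suc j dvd b" by blast
    then have "even b" by (simp add: dvd_mult_left)
    then obtain c' where c': "b = 2 * c'" by (rule evenE)
    with b have "c' \<in> {c. 2 * c \<in> B} \<and> 2 ^ j dvd c' \<and> \<not> 2 ^ (j + 1) dvd c'"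
      using exact_power_double[of j c'] by blast
    with c_unique c' show "b = 2 * c" by blast
  qed
qed

lemma exact_power_of_two_divisor:
  "(x::int) \<noteq> 0 \<Longrightarrow> \<exists>j. 2 ^ j dvd x \<and> \<not> 2 ^ (j + 1) dvd x"
  by (intro exI[of _ "multiplicity 2 x"])
     (simp add: multiplicity_dvd power_dvd_iff_le_multiplicity del: power_Suc)

lemma layer_decomposition:
  fixes B :: "int set"
  assumes unique: "\<forall>j. \<exists>!b. b \<in> B \<and> 2 ^ j dvd b \<and> \<not> 2 ^ (j + 1) dvd b"
    and covered: "\<forall>b\<in>B. \<exists>j. 2 ^ j dvd b \<and> \<not> 2 ^ (j + 1) dvd b"
  shows "\<exists>d :: nat \<Rightarrow> int. (\<forall>i. odd (d i)) \<and> B = range (\<lambda>i. 2 ^ i * d i)"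
proof -
  define e where "e i = (THE b. b \<in> B \<and> 2 ^ i dvd b \<and> \<not> 2 ^ (i + 1) dvd b)" for i :: nat
  have e: "e i \<in> B \<and> 2 ^ i dvd e i \<and> \<not> 2 ^ (i + 1) dvd e i" for i
    unfolding e_def using unique by (metis (no_types, lifting) theI')
  define d where "d i = e i div 2 ^ i" for i
  have e_d: "e i = 2 ^ i * d i" for i using e[of i] unfolding d_def by simp
  have "odd (d i)" for i
  proof
    assume "even (d i)"
    then have "2 ^ (i + 1) dvd e i" unfolding e_d by (auto elim!: evenE)
    then show False using e by blast
  qed
  moreover have "B = range e"
  proof
    show "B \<subseteq> range e"
    proof
      fix b assume "b \<in> B"
      then obtain j where "2 ^ j dvd b" "\<not> 2 ^ (j + 1) dvd b" using covered by blast
      then have "e j = b" unfolding e_def by (intro the1_equality) (use unique \<open>b \<in> B\<close> in auto)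
      then show "b \<in> range e" by blast
    qed
  qed (use e in auto)
  ultimately show ?thesis using e_d by (intro exI[of _ d]) auto
qed

theorem mainTheorem8:
  fixes B :: "int set"
  assumes "is_basis_Z B"
  shows "(\<exists>d :: nat \<Rightarrow> int. (\<forall>i. odd (d i)) \<and> B = range (\<lambda>i. 2 ^ i * d i))
       \<and> (\<forall>j::nat. \<exists>!b. b \<in> B \<and> 2 ^ j dvd b \<and> \<not> 2 ^ (j + 1) dvd b)
       \<and> (\<forall>b\<in>B. \<exists>j::nat. 2 ^ j dvd b \<and> \<not> 2 ^ (j + 1) dvd b)"
proof -
  have unique: "\<forall>j. \<exists>!b. b \<in> B \<and> 2 ^ j dvd b \<and> \<not> 2 ^ (j + 1) dvd b"
    using basis_layer_unique[OF assms] by blast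
  have covered: "\<forall>b\<in>B. \<exists>j. 2 ^ j dvd b \<and> \<not> 2 ^ (j + 1) dvd b"
    using exact_power_of_two_divisor basis_zero_notin[OF assms] by metis
  show ?thesis using layer_decomposition[OF unique covered] unique covered by blast
qed

end
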